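(* Let $V$ be a real vector space endowed with some topology and $X$ a convex cone in $V$. Suppose $w\in\mathbb{R}$, $f\in P_X$, and $u:X\to\mathbb{R}$ is a locally nonsatiated function. If $C\subseteq X$ is a cone in $V$ and $u$ is $C$-antichain-quasiconcave, then $\arg\max_{x\in B^w_{f,X}}u(x)$ is a convex $C$-antichain included in $\operatorname{bd}(F^w_f)$.
   Context: A cone in $V$ is a subset $K$ with $\lambda K\subseteq K$ for all $\lambda>0$ (possibly empty, need not contain $0$). $V^*$ denotes the continuous linear functionals on $V$; $P_X=\{f\in V^*: f(x)>0\text{ for all }x\in X\setminus\{0\}\}$; $F^w_f=\{v\in V:f(v)\le w\}$, $B^w_{f,X}=F^w_f\cap X$; $\operatorname{bd}$ is the topological boundary. A set $A$ is $C$-antichain-convex iff for all $x,y\in A$, $\lambda\in[0,1]$ with $y-x\notin C\cup(-C)$, $\lambda x+(1-\lambda)y\in A$; $A$ is a $C$-antichain iff for all distinct $x,y\in A$, $y-x\notin C\cup(-C)$. $u$ is $C$-antichain-quasiconcave iff $\{x\in X:u(x)\ge\lambda\}$ is $C$-antichain-convex for every $\lambda\in\mathbb{R}$; $u$ is locally nonsatiated iff $x\in\operatorname{cl}(\{y\in X:u(y)>u(x)\})$ for all $x\in X$ (closure in $V$). *)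

theory Defs
  imports "HOL-Analysis.Analysis"
begin

text \<open>Cone in the sense of the paper: closed under multiplication by strictly positive
  scalars (may be empty, need not contain 0).\<close>
definition pos_cone :: "'a::real_vector set \<Rightarrow> bool" where
  "pos_cone K \<longleftrightarrow> (\<forall>c::real>0. \<forall>x\<in>K. c *\<^sub>R x \<in> K)"

definition strictly_pos_functionals :: "'a::{real_vector,topological_space} set \<Rightarrow> ('a \<Rightarrow> real) set" where
  "strictly_pos_functionals X =
     {f. linear f \<and> continuous_on UNIV f \<and> (\<forall>x\<in>X - {0}. f x > 0)}"

definition budget_half :: "('a \<Rightarrow> real) \<Rightarrow> real \<Rightarrow> 'a set" where
  "budget_half f w = {v. f v \<le> w}"

definition budget_set :: "('a \<Rightarrow> real) \<Rightarrow> real \<Rightarrow> 'a set \<Rightarrow> 'a set" where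
  "budget_set f w X = budget_half f w \<inter> X"

definition antichain_convex :: "'a::real_vector set \<Rightarrow> 'a set \<Rightarrow> bool" where
  "antichain_convex C A \<longleftrightarrow>
     (\<forall>x\<in>A. \<forall>y\<in>A. \<forall>t::real. 0 \<le> t \<and> t \<le> 1 \<and> y - x \<notin> C \<union> uminus ` C
        \<longrightarrow> t *\<^sub>R x + (1 - t) *\<^sub>R y \<in> A)"

definition antichain :: "'a::real_vector set \<Rightarrow> 'a set \<Rightarrow> bool" where
  "antichain C A \<longleftrightarrow> (\<forall>x\<in>A. \<forall>y\<in>A. x \<noteq> y \<longrightarrow> y - x \<notin> C \<union> uminus ` C)"

definition antichain_quasiconcave :: "'a::real_vector set \<Rightarrow> 'a set \<Rightarrow> ('a \<Rightarrow> real) \<Rightarrow> bool" where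
  "antichain_quasiconcave C X u \<longleftrightarrow> (\<forall>t::real. antichain_convex C {x\<in>X. u x \<ge> t})"

definition locally_nonsatiated :: "'a::topological_space set \<Rightarrow> ('a \<Rightarrow> real) \<Rightarrow> bool" where
  "locally_nonsatiated X u \<longleftrightarrow> (\<forall>x\<in>X. x \<in> closure {y\<in>X. u y > u x})"

definition argmax_on :: "'a set \<Rightarrow> ('a \<Rightarrow> real) \<Rightarrow> 'a set" where
  "argmax_on B u = {x\<in>B. \<forall>y\<in>B. u y \<le> u x}"

end

theory Submission
  imports Defs
begin

text \<open>Local nonsatiation pushes every maximiser of u on the budget set to the budget line
  f x = w. Along that line f is constant, while f is strictly positive on the nonzero
  elements of C, so no two distinct maximisers differ by an element of C or -C. Hence any
  two maximisers are C-incomparable, so antichain-quasiconcavity puts the segment between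
  them into the upper level set of their common utility; it also stays in the convex budget
  set, so it consists of maximisers.\<close>

lemma argmax_on_subset_frontier:
  fixes X H :: "'a::topological_space set"
  assumes "locally_nonsatiated X u"
  shows "argmax_on (H \<inter> X) u \<subseteq> frontier H"
proof
  fix x assume x: "x \<in> argmax_on (H \<inter> X) u"
  then have "x \<in> H" and "x \<in> X" and x_max: "\<And>y. y \<in> H \<Longrightarrow> y \<in> X \<Longrightarrow> u y \<le> u x"
    by (auto simp: argmax_on_def)
  have "x \<notin> interior H"
  proof
    assume "x \<in> interior H"
    then obtain U where "open U" "x \<in> U" "U \<subseteq> H"
      by (meson interiorE)
    moreover have "x \<in> closure {y\<in>X. u y > u x}"
      using assms \<open>x \<in> X\<close> by (auto simp: locally_nonsatiated_def)
    ultimately obtain y where "y \<in> U" "y \<in> X" "u y > u x"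
      unfolding closure_iff_nhds_not_empty by blast
    with \<open>U \<subseteq> H\<close> x_max show False
      by force
  qed
  with \<open>x \<in> H\<close> closure_subset show "x \<in> frontier H"
    by (auto simp: frontier_def)
qed

lemma frontier_sublevel_subset_level:
  fixes f :: "'a::topological_space \<Rightarrow> real"
  assumes "continuous_on UNIV f"
  shows "frontier {v. f v \<le> w} \<subseteq> {v. f v = w}"
proof -
  have "{v. f v < w} \<subseteq> interior {v. f v \<le> w}"
    using open_Collect_less[OF assms continuous_on_const] by (intro interior_maximal) auto
  moreover have "frontier {v. f v \<le> w} \<subseteq> {v. f v \<le> w}"
    using closed_Collect_le[OF assms continuous_on_const] by (rule frontier_subset_closed)
  ultimately show ?thesis
    by (auto simp: frontier_def dest!: subsetD)
qed

lemma antichain_if_level_set: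
  fixes f :: "'a::real_vector \<Rightarrow> real"
  assumes "linear f" and pos: "\<And>c. c \<in> C - {0} \<Longrightarrow> f c > 0"
    and "A \<subseteq> {v. f v = w}"
  shows "antichain C A"
  unfolding antichain_def
proof (intro ballI impI)
  fix x y assume "x \<in> A" "y \<in> A" "x \<noteq> y"
  then have "f (y - x) = 0" and "f (x - y) = 0"
    using assms(3) by (auto simp: linear_diff[OF \<open>linear f\<close>])
  with \<open>x \<noteq> y\<close> have "y - x \<notin> C" and "x - y \<notin> C"
    using pos[of "y - x"] pos[of "x - y"] by auto
  then show "y - x \<notin> C \<union> uminus ` C"
    by (metis UnE imageE minus_diff_eq minus_minus)
qed

lemma convex_argmax_on_if_antichain:
  assumes "convex B" and "B \<subseteq> X"
    and "antichain_quasiconcave C X u"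
    and "antichain C (argmax_on B u)"
  shows "convex (argmax_on B u)"
  unfolding convex_def
proof (intro ballI allI impI)
  let ?M = "argmax_on B u"
  fix x y and a b :: real
  assume x: "x \<in> ?M" and y: "y \<in> ?M" and ab: "0 \<le> a" "0 \<le> b" "a + b = 1"
  have "x \<in> B" "y \<in> B" and x_max: "\<And>z. z \<in> B \<Longrightarrow> u z \<le> u x"
    using x y by (auto simp: argmax_on_def)
  have z_in_B: "a *\<^sub>R x + b *\<^sub>R y \<in> B"
    using \<open>convex B\<close> \<open>x \<in> B\<close> \<open>y \<in> B\<close> ab by (simp add: convex_def)
  show "a *\<^sub>R x + b *\<^sub>R y \<in> ?M"
  proof (cases "x = y")
    case True
    then show ?thesis
      using x ab by (metis scaleR_add_left scaleR_one)
  next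
    case False
    then have "y - x \<notin> C \<union> uminus ` C"
      using assms(4) x y by (auto simp: antichain_def)
    moreover have "u y = u x"
      using x y by (auto simp: argmax_on_def intro: order_antisym)
    moreover have "antichain_convex C {z\<in>X. u z \<ge> u x}"
      using assms(3) by (simp add: antichain_quasiconcave_def)
    ultimately have "a *\<^sub>R x + (1 - a) *\<^sub>R y \<in> {z\<in>X. u z \<ge> u x}"
      using \<open>x \<in> B\<close> \<open>y \<in> B\<close> \<open>B \<subseteq> X\<close> ab
      unfolding antichain_convex_def by (simp add: subset_iff)
    moreover have "b = 1 - a"
      using ab by simp
    ultimately show ?thesis
      using z_in_B x_max by (force simp: argmax_on_def)
  qed
qed

lemma convex_budget_set:
  assumes "linear f" and "convex X"
  shows "convex (budget_set f w X)"
proof -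
  have "budget_set f w X = f -` {..w} \<inter> X"
    by (auto simp: budget_set_def budget_half_def)
  then show ?thesis
    using convex_linear_vimage[OF \<open>linear f\<close> convex_real_interval(2)] \<open>convex X\<close>
    by (simp add: convex_Int)
qed

theorem theorem14:
  fixes X C :: "'a::{real_vector,topological_space} set"
    and f u :: "'a \<Rightarrow> real" and w :: real
  assumes "convex X" and "pos_cone X"
    and "f \<in> strictly_pos_functionals X"
    and "locally_nonsatiated X u"
    and "C \<subseteq> X" and "pos_cone C"
    and "antichain_quasiconcave C X u"
  shows "convex (argmax_on (budget_set f w X) u)
       \<and> antichain C (argmax_on (budget_set f w X) u)
       \<and> argmax_on (budget_set f w X) u \<subseteq> frontier (budget_half f w)"
proof -
  let ?M = "argmax_on (budget_set f w X) u"
  have "linear f" and "continuous_on UNIV f" and pos: "\<And>x. x \<in> X - {0} \<Longrightarrow> f x > 0"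
    using assms(3) by (auto simp: strictly_pos_functionals_def)
  have frontier: "?M \<subseteq> frontier (budget_half f w)"
    using argmax_on_subset_frontier[OF assms(4)] by (simp add: budget_set_def)
  also have "\<dots> \<subseteq> {v. f v = w}"
    using frontier_sublevel_subset_level[OF \<open>continuous_on UNIV f\<close>]
    by (simp add: budget_half_def)
  finally have antichain: "antichain C ?M"
    using antichain_if_level_set[OF \<open>linear f\<close>] pos \<open>C \<subseteq> X\<close> by blast
  moreover have "convex ?M"
    using convex_argmax_on_if_antichain[OF convex_budget_set[OF \<open>linear f\<close> \<open>convex X\<close>]
        _ assms(7) antichain]
    by (auto simp: budget_set_def)
  ultimately show ?thesis
    using frontier by blast
qed

end
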